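(* Let $M,K$ be real anti-symmetric $m\times m$ matrices, $S:\mathbb R^m\to\mathbb R$ smooth, $A$ real symmetric, and let $Q$ be an orthogonal matrix and $\Lambda$ a real $\lfloor m/2\rfloor\times\lfloor m/2\rfloor$ matrix with $$K=Q^T\begin{pmatrix}0&0&-\Lambda^T\\0&0&0\\\Lambda&0&0\end{pmatrix}Q\ (m\text{ odd}),\qquad K=Q^T\begin{pmatrix}0&-\Lambda^T\\\Lambda&0\end{pmatrix}Q\ (m\text{ even}).$$ Suppose $B=\beta M$ for some real $\beta$ and that the last $\lfloor m/2\rfloor$ columns of $MQ^T$ are zero. Let $\mathbf z_h$ be a solution of the semi-discrete DG scheme described in the context, and write $Q\mathbf z_h=(\mathbf u_h,w_h,\mathbf v_h)^T$ ($m$ odd) or $Q\mathbf z_h=(\mathbf u_h,\mathbf v_h)^T$ ($m$ even) with $\mathbf u_h,\mathbf v_h\in(V_h)^{\lfloor m/2\rfloor}$, $w_h\in V_h$. Let $\nabla_{\mathbf v}S(\mathbf z_h)$ denote the vector of the last $\lfloor m/2\rfloor$ components of $Q\nabla_{\mathbf z}S(\mathbf z_h)$, and let $$\widetilde A=Q^T\begin{pmatrix}I&0&0\\0&1&0\\0&0&-I\end{pmatrix}QA\ (m\text{ odd}),\qquad \widetilde A=Q^T\begin{pmatrix}I&0\\0&-I\end{pmatrix}QA\ (m\text{ even}).$$ Then the total energy $\mathcal E_h=\int_\Omega\big(S(\mathbf z_h)-\tfrac12K\partial_x\mathbf z_h\cdot\mathbf z_h\big)dx+\tfrac12\sum_j\big((K\{\mathbf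 z_h\}+A[\mathbf z_h])\cdot[\mathbf z_h]\big)_{j+\frac12}$ satisfies $$\mathcal E_h=\int_\Omega\big(S(\mathbf z_h)-\nabla_{\mathbf v}S(\mathbf z_h)\cdot\mathbf v_h\big)dx+\tfrac12\sum_j\big(\widetilde A[\mathbf z_h]\cdot[\mathbf z_h]\big)_{j+\frac12}.$$ In particular, if $A=\alpha Q^T\begin{pmatrix}0&0&\Lambda^T\\0&0&0\\\Lambda&0&0\end{pmatrix}Q$ ($m$ odd) or $A=\alpha Q^T\begin{pmatrix}0&\Lambda^T\\\Lambda&0\end{pmatrix}Q$ ($m$ even) with $\alpha\in[-\frac12,\frac12]$, then $\widetilde A$ is anti-symmetric and $\mathcal E_h=\int_\Omega\big(S(\mathbf z_h)-\nabla_{\mathbf v}S(\mathbf z_h)\cdot\mathbf v_h\big)dx$.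
   Context: Mesh and spaces: a one-dimensional domain $\Omega$ is partitioned into cells $I_j=[x_{j-1/2},x_{j+1/2}]$, $j=1,\dots,N$, with periodic boundary conditions (interface indices modulo $N$). For fixed $k\ge0$, $V_h=\{v\in L^2(\Omega): v|_{I_j}\text{ is a polynomial of degree}\le k\ \forall j\}$, $\mathbf V_h=(V_h)^m$. For $\mathbf v\in\mathbf V_h$, $\mathbf v^\pm_{j+1/2}$ are right/left limits at $x_{j+1/2}$, $\{\mathbf v\}=\frac12(\mathbf v^++\mathbf v^-)$, $[\mathbf v]=\mathbf v^+-\mathbf v^-$; subscript $j+\frac12$ means evaluation at $x_{j+1/2}$; $\partial_x$ is taken cellwise. The semi-discrete DG scheme: find $\mathbf z_h(t)\in\mathbf V_h$, continuously differentiable in $t$, such that for all $j$ and all $\boldsymbol\varphi\in\mathbf V_h$, $$\int_{I_j}M\partial_t\mathbf z_h\cdot\boldsymbol\varphi\,dx-\int_{I_j}K\mathbf z_h\cdot\partial_x\boldsymbol\varphi\,dx+\big(\widehat{K\mathbf z_h}\cdot\boldsymbol\varphi^-\big)_{j+\frac12}-\big(\widehat{K\mathbf z_h}\cdot\boldsymbol\varphi^+\big)_{j-\frac12}=\int_{I_j}\nabla_{\mathbf z}S(\mathbf z_h)\cdot\boldsymbol\varphi\,dx,$$ with $\widehat{K\mathbf z_h}=K\{\mathbf z_h\}+A[\mathbf z_h]+B\,\partial_t[\mathbf z_h]$ at each interface. *)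

theory Defs
  imports "HOL-Analysis.Analysis" "HOL-Computational_Algebra.Polynomial"
begin

text \<open>Vectors of R^m are represented as functions nat => real; only the
components with index < m matter (index 0 .. m-1).  Matrices are functions
nat => nat => real; only the entries with indices < m (resp. < p) matter.\<close>

definition vecs :: "nat \<Rightarrow> (nat \<Rightarrow> real) set" where
  "vecs m = {v. \<forall>i\<ge>m. v i = 0}"

definition dotv :: "nat \<Rightarrow> (nat \<Rightarrow> real) \<Rightarrow> (nat \<Rightarrow> real) \<Rightarrow> real" where
  "dotv m u v = (\<Sum>i<m. u i * v i)"

definition mv :: "nat \<Rightarrow> (nat \<Rightarrow> nat \<Rightarrow> real) \<Rightarrow> (nat \<Rightarrow> real) \<Rightarrow> (nat \<Rightarrow> real)" where
  "mv m A v = (\<lambda>i. if i < m then (\<Sum>j<m. A i j * v j) else 0)"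

definition mmul :: "nat \<Rightarrow> (nat \<Rightarrow> nat \<Rightarrow> real) \<Rightarrow> (nat \<Rightarrow> nat \<Rightarrow> real) \<Rightarrow> (nat \<Rightarrow> nat \<Rightarrow> real)" where
  "mmul m A B = (\<lambda>i j. \<Sum>l<m. A i l * B l j)"

definition mtr :: "(nat \<Rightarrow> nat \<Rightarrow> real) \<Rightarrow> (nat \<Rightarrow> nat \<Rightarrow> real)" where
  "mtr A = (\<lambda>i j. A j i)"

definition mscale :: "real \<Rightarrow> (nat \<Rightarrow> nat \<Rightarrow> real) \<Rightarrow> (nat \<Rightarrow> nat \<Rightarrow> real)" where
  "mscale c A = (\<lambda>i j. c * A i j)"

definition meq :: "nat \<Rightarrow> (nat \<Rightarrow> nat \<Rightarrow> real) \<Rightarrow> (nat \<Rightarrow> nat \<Rightarrow> real) \<Rightarrow> bool" where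
  "meq m A B \<longleftrightarrow> (\<forall>i<m. \<forall>j<m. A i j = B i j)"

definition idm :: "nat \<Rightarrow> nat \<Rightarrow> real" where
  "idm i j = (if i = j then 1 else 0)"

definition antisym_mat :: "nat \<Rightarrow> (nat \<Rightarrow> nat \<Rightarrow> real) \<Rightarrow> bool" where
  "antisym_mat m A \<longleftrightarrow> (\<forall>i<m. \<forall>j<m. A j i = - A i j)"

definition sym_mat :: "nat \<Rightarrow> (nat \<Rightarrow> nat \<Rightarrow> real) \<Rightarrow> bool" where
  "sym_mat m A \<longleftrightarrow> (\<forall>i<m. \<forall>j<m. A j i = A i j)"

definition orthogonal_mat :: "nat \<Rightarrow> (nat \<Rightarrow> nat \<Rightarrow> real) \<Rightarrow> bool" where
  "orthogonal_mat m Q \<longleftrightarrow> meq m (mmul m (mtr Q) Q) idm"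

text \<open>With p = m div 2 the index ranges are
  [0,p) (block of u), [p, m-p) (the middle index of w, only for m odd; empty
  for m even) and [m-p, m) (block of v).  Hence
  skewblk m L = [[0,0,-L^T],[0,0,0],[L,0,0]] (m odd), [[0,-L^T],[L,0]] (m even);
  symblk  m L = [[0,0, L^T],[0,0,0],[L,0,0]] (m odd), [[0, L^T],[L,0]] (m even);
  sgnblk  m   = diag(I,1,-I) (m odd), diag(I,-I) (m even).\<close>

definition skewblk :: "nat \<Rightarrow> (nat \<Rightarrow> nat \<Rightarrow> real) \<Rightarrow> (nat \<Rightarrow> nat \<Rightarrow> real)" where
  "skewblk m L = (\<lambda>i j.
     if i < m div 2 \<and> m - m div 2 \<le> j then - L (j - (m - m div 2)) i
     else if m - m div 2 \<le> i \<and> j < m div 2 then L (i - (m - m div 2)) j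
     else 0)"

definition symblk :: "nat \<Rightarrow> (nat \<Rightarrow> nat \<Rightarrow> real) \<Rightarrow> (nat \<Rightarrow> nat \<Rightarrow> real)" where
  "symblk m L = (\<lambda>i j.
     if i < m div 2 \<and> m - m div 2 \<le> j then L (j - (m - m div 2)) i
     else if m - m div 2 \<le> i \<and> j < m div 2 then L (i - (m - m div 2)) j
     else 0)"

definition sgnblk :: "nat \<Rightarrow> (nat \<Rightarrow> nat \<Rightarrow> real)" where
  "sgnblk m = (\<lambda>i j. if i = j then (if i < m - m div 2 then 1 else -1) else 0)"

definition enorm :: "nat \<Rightarrow> (nat \<Rightarrow> real) \<Rightarrow> real" where
  "enorm m v = sqrt (\<Sum>i<m. (v i)^2)"

definition cont_vecs :: "nat \<Rightarrow> ((nat \<Rightarrow> real) \<Rightarrow> real) \<Rightarrow> bool" where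
  "cont_vecs m g \<longleftrightarrow> (\<forall>z\<in>vecs m. \<forall>e>0. \<exists>d>0. \<forall>y\<in>vecs m.
      enorm m (\<lambda>i. y i - z i) < d \<longrightarrow> \<bar>g y - g z\<bar> < e)"

definition shift :: "(nat \<Rightarrow> real) \<Rightarrow> nat \<Rightarrow> real \<Rightarrow> (nat \<Rightarrow> real)" where
  "shift z i t = (\<lambda>l. z l + (if l = i then t else 0))"

text \<open>C-infinity on R^m: all iterated partial derivatives exist and are continuous.\<close>
definition smooth_vecs :: "nat \<Rightarrow> ((nat \<Rightarrow> real) \<Rightarrow> real) \<Rightarrow> bool" where
  "smooth_vecs m S \<longleftrightarrow> (\<exists>D :: nat list \<Rightarrow> (nat \<Rightarrow> real) \<Rightarrow> real.
      D [] = S \<and> (\<forall>is. cont_vecs m (D is)) \<and>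
      (\<forall>is i z. i < m \<longrightarrow> z \<in> vecs m \<longrightarrow>
          ((\<lambda>t. D is (shift z i t)) has_real_derivative D (i # is) z) (at 0)))"

definition gradv :: "nat \<Rightarrow> ((nat \<Rightarrow> real) \<Rightarrow> real) \<Rightarrow> (nat \<Rightarrow> real) \<Rightarrow> (nat \<Rightarrow> real)" where
  "gradv m S z = (\<lambda>i. if i < m then deriv (\<lambda>t. S (shift z i t)) 0 else 0)"

text \<open>Mesh: nodes x 0 < x 1 < ... < x N; cell I_j = [x (j-1), x j], j = 1..N;
the interface x_{j+1/2} is x j.  By periodicity x_{1/2} is identified with
x_{N+1/2}: interface N has left cell N and right cell 1.
A function of (V_h)^m at a fixed time is Z :: nat => nat => real poly, where
Z j i is the polynomial of component i (< m) on cell j (1..N).\<close>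

definition in_Vh :: "nat \<Rightarrow> nat \<Rightarrow> nat \<Rightarrow> (nat \<Rightarrow> nat \<Rightarrow> real poly) \<Rightarrow> bool" where
  "in_Vh m N k Z \<longleftrightarrow> (\<forall>j\<in>{1..N}. \<forall>i<m. degree (Z j i) \<le> k)"

definition cellv :: "nat \<Rightarrow> (nat \<Rightarrow> nat \<Rightarrow> real poly) \<Rightarrow> nat \<Rightarrow> real \<Rightarrow> (nat \<Rightarrow> real)" where
  "cellv m Z j y = (\<lambda>i. if i < m then poly (Z j i) y else 0)"

definition cellvd :: "nat \<Rightarrow> (nat \<Rightarrow> nat \<Rightarrow> real poly) \<Rightarrow> nat \<Rightarrow> real \<Rightarrow> (nat \<Rightarrow> real)" where
  "cellvd m Z j y = (\<lambda>i. if i < m then poly (pderiv (Z j i)) y else 0)"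

definition nxt :: "nat \<Rightarrow> nat \<Rightarrow> nat" where
  "nxt N l = (if l = N then 1 else Suc l)"

definition prv :: "nat \<Rightarrow> nat \<Rightarrow> nat" where
  "prv N j = (if j = 1 then N else j - 1)"

text \<open>Left limit v^- and right limit v^+ at the interface x_{l+1/2}, l = 1..N.\<close>
definition vminus :: "nat \<Rightarrow> (nat \<Rightarrow> real) \<Rightarrow> (nat \<Rightarrow> nat \<Rightarrow> real poly) \<Rightarrow> nat \<Rightarrow> (nat \<Rightarrow> real)" where
  "vminus m x Z l = cellv m Z l (x l)"

definition vplus :: "nat \<Rightarrow> (nat \<Rightarrow> real) \<Rightarrow> nat \<Rightarrow> (nat \<Rightarrow> nat \<Rightarrow> real poly) \<Rightarrow> nat \<Rightarrow> (nat \<Rightarrow> real)" where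
  "vplus m x N Z l = cellv m Z (nxt N l) (x (nxt N l - 1))"

definition avg :: "nat \<Rightarrow> (nat \<Rightarrow> real) \<Rightarrow> nat \<Rightarrow> (nat \<Rightarrow> nat \<Rightarrow> real poly) \<Rightarrow> nat \<Rightarrow> (nat \<Rightarrow> real)" where
  "avg m x N Z l = (\<lambda>i. (vplus m x N Z l i + vminus m x Z l i) / 2)"

definition jmp :: "nat \<Rightarrow> (nat \<Rightarrow> real) \<Rightarrow> nat \<Rightarrow> (nat \<Rightarrow> nat \<Rightarrow> real poly) \<Rightarrow> nat \<Rightarrow> (nat \<Rightarrow> real)" where
  "jmp m x N Z l = (\<lambda>i. vplus m x N Z l i - vminus m x Z l i)"

text \<open>Numerical flux K{z} + A[z] + B d/dt [z] at interface l (DZ = time derivative of Z).\<close>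
definition flux :: "nat \<Rightarrow> (nat \<Rightarrow> real) \<Rightarrow> nat \<Rightarrow> (nat \<Rightarrow> nat \<Rightarrow> real) \<Rightarrow> (nat \<Rightarrow> nat \<Rightarrow> real)
     \<Rightarrow> (nat \<Rightarrow> nat \<Rightarrow> real) \<Rightarrow> (nat \<Rightarrow> nat \<Rightarrow> real poly) \<Rightarrow> (nat \<Rightarrow> nat \<Rightarrow> real poly) \<Rightarrow> nat \<Rightarrow> (nat \<Rightarrow> real)" where
  "flux m x N K A B Z DZ l =
     (\<lambda>i. mv m K (avg m x N Z l) i + mv m A (jmp m x N Z l) i + mv m B (jmp m x N DZ l) i)"

definition dg_cell_eq where
  "dg_cell_eq m x N M K A B S Z DZ Phi j \<longleftrightarrow>
     integral {x (j - 1)..x j} (\<lambda>y. dotv m (mv m M (cellv m DZ j y)) (cellv m Phi j y))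
     - integral {x (j - 1)..x j} (\<lambda>y. dotv m (mv m K (cellv m Z j y)) (cellvd m Phi j y))
     + dotv m (flux m x N K A B Z DZ j) (cellv m Phi j (x j))
     - dotv m (flux m x N K A B Z DZ (prv N j)) (cellv m Phi j (x (j - 1)))
     = integral {x (j - 1)..x j} (\<lambda>y. dotv m (gradv m S (cellv m Z j y)) (cellv m Phi j y))"

text \<open>zh t is the DG solution at time t, dzh t its time derivative; the time
interval is [0,T].  zh is continuously differentiable in t (coefficientwise,
which is the same as in the finite-dimensional space V_h^m).\<close>
definition dg_solution where
  "dg_solution m N k x T M K A B S zh dzh \<longleftrightarrow>
     (\<forall>t\<in>{0..T}. in_Vh m N k (zh t) \<and> in_Vh m N k (dzh t)) \<and>
     (\<forall>j\<in>{1..N}. \<forall>i<m. \<forall>c. \<forall>t\<in>{0..T}.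
        ((\<lambda>s. coeff (zh s j i) c) has_real_derivative coeff (dzh t j i) c) (at t within {0..T})) \<and>
     (\<forall>j\<in>{1..N}. \<forall>i<m. \<forall>c. continuous_on {0..T} (\<lambda>t. coeff (dzh t j i) c)) \<and>
     (\<forall>t\<in>{0..T}. \<forall>Phi. in_Vh m N k Phi \<longrightarrow>
        (\<forall>j\<in>{1..N}. dg_cell_eq m x N M K A B S (zh t) (dzh t) Phi j))"

definition energy where
  "energy m x N K A S Z =
     (\<Sum>j=1..N. integral {x (j - 1)..x j}
        (\<lambda>y. S (cellv m Z j y) - dotv m (mv m K (cellvd m Z j y)) (cellv m Z j y) / 2))
     + (\<Sum>l=1..N. dotv m (\<lambda>i. mv m K (avg m x N Z l) i + mv m A (jmp m x N Z l) i)
                          (jmp m x N Z l)) / 2"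

definition gradv_dot_v where
  "gradv_dot_v m Q S z =
     (\<Sum>i\<in>{m - m div 2..<m}. mv m Q (gradv m S z) i * mv m Q z i)"

definition bulk_term where
  "bulk_term m x N Q S Z =
     (\<Sum>j=1..N. integral {x (j - 1)..x j}
        (\<lambda>y. S (cellv m Z j y) - gradv_dot_v m Q S (cellv m Z j y)))"

definition Atilde where
  "Atilde m Q A = mmul m (mtr Q) (mmul m (sgnblk m) (mmul m Q A))"

end

theory Submission
  imports Defs "Jordan_Normal_Form.Determinant"
begin

text \<open>
  Test the scheme with \<open>\<Phi> = P z\<^sub>h\<close>, where \<open>P = Q\<^sup>T diag(0,(0),I) Q\<close> extracts the \<open>v\<close>-block.
  Since the last columns of \<open>M Q\<^sup>T\<close> vanish, \<open>M P = 0\<close>, so the terms with \<open>M\<close> and \<open>B = \<beta> M\<close>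
  drop out, and the source term becomes \<open>\<nabla>\<^sub>v S(z\<^sub>h) \<cdot> v\<^sub>h\<close>. The block form of \<open>K\<close> gives
  \<open>K a \<cdot> b = K a \<cdot> P b - K b \<cdot> P a\<close>; hence on each cell \<open>K \<partial>\<^sub>x z\<^sub>h \<cdot> z\<^sub>h\<close> is the derivative of
  \<open>K z\<^sub>h \<cdot> P z\<^sub>h\<close> minus \<open>2 K z\<^sub>h \<cdot> P \<partial>\<^sub>x z\<^sub>h\<close>, and the integral of the latter is supplied by the
  tested scheme. Summing over the cells, the boundary values and the numerical fluxes
  collect at each interface into \<open>1/2 A\<^sup>~[z\<^sub>h] \<cdot> [z\<^sub>h]\<close>, because \<open>Q\<^sup>T diag(I,(1),-I) Q = I - 2P\<close>.
  For \<open>A = \<alpha> Q\<^sup>T (symmetric block of \<Lambda>) Q\<close> one gets \<open>A\<^sup>~ = -\<alpha> K\<close>, which is antisymmetric, so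
  the interface terms vanish.
\<close>

hide_const (open) Matrix.orthogonal_mat

section \<open>Matrix algebra in dimension \<open>m\<close>\<close>

type_synonym rvec = "nat \<Rightarrow> real"
type_synonym rmat = "nat \<Rightarrow> nat \<Rightarrow> real"

lemma orthogonal_mat_right_inverse:
  assumes "orthogonal_mat m Q"
  shows "meq m (mmul m Q (mtr Q)) idm"
proof -
  define A where "A = mat m m (\<lambda>(i, j). Q j i)"
  define B where "B = mat m m (\<lambda>(i, j). Q i j)"
  have A: "A \<in> carrier_mat m m" and B: "B \<in> carrier_mat m m" by (auto simp: A_def B_def)
  have "A * B = 1\<^sub>m m"
  proof (rule eq_matI)
    fix i j assume "i < dim_row (1\<^sub>m m :: real mat)" "j < dim_col (1\<^sub>m m :: real mat)"
    hence ij: "i < m" "j < m" by auto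
    have "(A * B) $$ (i, j) = (\<Sum>l<m. Q l i * Q l j)"
      using ij by (simp add: A_def B_def scalar_prod_def atLeast0LessThan)
    also have "\<dots> = idm i j" using assms ij
      by (simp add: Defs.orthogonal_mat_def meq_def mmul_def mtr_def)
    finally show "(A * B) $$ (i, j) = 1\<^sub>m m $$ (i, j)" using ij by (simp add: idm_def)
  qed (auto simp: A_def B_def)
  hence BA: "B * A = 1\<^sub>m m" by (rule mat_mult_left_right_inverse[OF A B])
  show ?thesis unfolding meq_def
  proof (intro allI impI)
    fix i j assume ij: "i < m" "j < m"
    have "mmul m Q (mtr Q) i j = (B * A) $$ (i, j)"
      using ij by (simp add: A_def B_def scalar_prod_def atLeast0LessThan mmul_def mtr_def)
    also have "\<dots> = idm i j" using ij BA by (simp add: idm_def)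
    finally show "mmul m Q (mtr Q) i j = idm i j" .
  qed
qed

lemma mv_mmul: "mv m (mmul m A B) v = mv m A (mv m B v)"
proof (rule ext)
  fix i show "mv m (mmul m A B) v i = mv m A (mv m B v) i"
  proof (cases "i < m")
    case True
    have "(\<Sum>j<m. (\<Sum>l<m. A i l * B l j) * v j) = (\<Sum>j<m. \<Sum>l<m. A i l * B l j * v j)"
      by (simp add: sum_distrib_right)
    also have "\<dots> = (\<Sum>l<m. \<Sum>j<m. A i l * B l j * v j)" by (rule sum.swap)
    also have "\<dots> = (\<Sum>l<m. A i l * (\<Sum>j<m. B l j * v j))"
      by (simp add: sum_distrib_left mult.assoc)
    finally show ?thesis using True unfolding mv_def mmul_def by simp
  qed (simp add: mv_def)
qed

lemma mmul_assoc: "mmul m (mmul m A B) C = mmul m A (mmul m B C)"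
proof (intro ext)
  fix i j
  have "(\<Sum>l<m. (\<Sum>r<m. A i r * B r l) * C l j) = (\<Sum>l<m. \<Sum>r<m. A i r * B r l * C l j)"
    by (simp add: sum_distrib_right)
  also have "\<dots> = (\<Sum>r<m. \<Sum>l<m. A i r * B r l * C l j)" by (rule sum.swap)
  also have "\<dots> = (\<Sum>r<m. A i r * (\<Sum>l<m. B r l * C l j))"
    by (simp add: sum_distrib_left mult.assoc)
  finally show "mmul m (mmul m A B) C i j = mmul m A (mmul m B C) i j" unfolding mmul_def .
qed

lemma dotv_mv_mtr: "dotv m (mv m A u) v = dotv m u (mv m (mtr A) v)"
  unfolding dotv_def mv_def mtr_def
  by (simp add: sum_distrib_left sum_distrib_right mult_ac, subst sum.swap, simp)

lemma mtr_mtr [simp]: "mtr (mtr A) = A"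
  by (simp add: mtr_def)

lemma mv_meq: "meq m A B \<Longrightarrow> mv m A v = mv m B v"
  unfolding meq_def mv_def by (auto intro!: ext sum.cong)

lemma mv_mscale: "mv m (mscale c A) v = (\<lambda>i. c * mv m A v i)"
  unfolding mv_def mscale_def by (auto intro!: ext simp: sum_distrib_left mult_ac)

lemma sum_idm: "(\<Sum>l<m. idm i l * f l) = (if i < m then f i else 0)"
  unfolding idm_def by (simp add: if_distrib[of "\<lambda>c. c * _"] sum.delta cong: if_cong)

lemma dotv_mv_idm [simp]: "dotv m u (mv m idm v) = dotv m u v"
  unfolding dotv_def mv_def by (simp add: sum_idm)

lemma mv_diff: "mv m A (\<lambda>i. a i - b i) = (\<lambda>i. mv m A a i - mv m A b i)"
  unfolding mv_def by (auto intro!: ext simp: algebra_simps sum_subtractf)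

lemma mv_average: "mv m A (\<lambda>i. (a i + b i) / 2) = (\<lambda>i. (mv m A a i + mv m A b i) / 2)"
  unfolding mv_def
  by (auto intro!: ext simp: algebra_simps sum.distrib sum_divide_distrib[symmetric] add_divide_distrib)

lemma dotv_diff_left: "dotv m (\<lambda>i. a i - b i) c = dotv m a c - dotv m b c"
  unfolding dotv_def by (simp add: algebra_simps sum_subtractf)

lemma dotv_diff_right: "dotv m c (\<lambda>i. a i - b i) = dotv m c a - dotv m c b"
  unfolding dotv_def by (simp add: algebra_simps sum_subtractf)

lemma dotv_add_left: "dotv m (\<lambda>i. a i + b i) c = dotv m a c + dotv m b c"
  unfolding dotv_def by (simp add: algebra_simps sum.distrib)

lemma dotv_average_left: "dotv m (\<lambda>i. (a i + b i) / 2) c = (dotv m a c + dotv m b c) / 2"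
  unfolding dotv_def
  by (simp add: algebra_simps sum.distrib sum_divide_distrib[symmetric] add_divide_distrib)

lemma dotv_average_right: "dotv m c (\<lambda>i. (a i + b i) / 2) = (dotv m c a + dotv m c b) / 2"
  unfolding dotv_def
  by (simp add: algebra_simps sum.distrib sum_divide_distrib[symmetric] add_divide_distrib)

lemma dotv_antisym_self:
  assumes "antisym_mat m A"
  shows "dotv m (mv m A v) v = 0"
proof -
  define X where "X = (\<Sum>i<m. \<Sum>j<m. A i j * v j * v i)"
  have "X = (\<Sum>j<m. \<Sum>i<m. A i j * v j * v i)" unfolding X_def by (rule sum.swap)
  also have "\<dots> = (\<Sum>j<m. \<Sum>i<m. - (A j i * v i * v j))"
  proof (intro sum.cong refl)
    fix i j assume "i \<in> {..<m}" "j \<in> {..<m}"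
    hence "A j i = - A i j" using assms unfolding antisym_mat_def by blast
    thus "A i j * v j * v i = - (A j i * v i * v j)" by simp
  qed
  also have "\<dots> = - X" unfolding X_def sum_negf ..
  finally have "X = 0" by linarith
  moreover have "dotv m (mv m A v) v = X"
    unfolding dotv_def mv_def X_def by (simp add: sum_distrib_right)
  ultimately show ?thesis by simp
qed

lemma meq_refl [simp]: "meq m A A"
  unfolding meq_def by simp

lemma meq_sym: "meq m A B \<Longrightarrow> meq m B A"
  unfolding meq_def by simp

lemma meq_trans [trans]: "meq m A B \<Longrightarrow> meq m B C \<Longrightarrow> meq m A C"
  unfolding meq_def by simp

lemma meq_mmul: "meq m A A' \<Longrightarrow> meq m B B' \<Longrightarrow> meq m (mmul m A B) (mmul m A' B')"
  unfolding meq_def mmul_def by simp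

lemma meq_mscale: "meq m A B \<Longrightarrow> meq m (mscale c A) (mscale c B)"
  unfolding meq_def mscale_def by simp

lemma mmul_mscale_left: "mmul m (mscale c A) B = mscale c (mmul m A B)"
  unfolding mmul_def mscale_def by (auto intro!: ext simp: sum_distrib_left mult_ac)

lemma mmul_mscale_right: "mmul m A (mscale c B) = mscale c (mmul m A B)"
  unfolding mmul_def mscale_def by (auto intro!: ext simp: sum_distrib_left mult_ac)

lemma mmul_idm_left: "meq m (mmul m idm B) B"
  unfolding meq_def mmul_def by (simp add: sum_idm)

section \<open>The block structure\<close>

text \<open>\<open>vproj m = diag(0,(0),I)\<close>; \<open>vprojQ m Q\<close> below is the projection \<open>P\<close>.\<close>

definition vproj :: "nat \<Rightarrow> rmat" where
  "vproj m = (\<lambda>i j. if i = j \<and> m - m div 2 \<le> i then 1 else 0)"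

lemma mv_vproj: "mv m (vproj m) b = (\<lambda>i. if i < m \<and> m - m div 2 \<le> i then b i else 0)"
proof (rule ext)
  fix i
  have "(\<Sum>j<m. vproj m i j * b j) = (\<Sum>j<m. if i = j then (if m - m div 2 \<le> i then b j else 0) else 0)"
    unfolding vproj_def by (intro sum.cong) auto
  thus "mv m (vproj m) b i = (if i < m \<and> m - m div 2 \<le> i then b i else 0)"
    by (simp add: mv_def sum.delta)
qed

lemma mtr_vproj [simp]: "mtr (vproj m) = vproj m"
  unfolding mtr_def vproj_def by (auto intro!: ext)

lemma skewblk_split:
  "dotv m (mv m (skewblk m L) a) b =
   dotv m (mv m (skewblk m L) a) (mv m (vproj m) b) - dotv m (mv m (skewblk m L) b) (mv m (vproj m) a)"
proof -
  define p where "p = m div 2"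
  define q where "q = m - m div 2"
  have pq: "p \<le> q" unfolding p_def q_def by simp
  have skew: "skewblk m L i j =
      (if i < p \<and> q \<le> j then - L (j - q) i else if q \<le> i \<and> j < p then L (i - q) j else 0)" for i j
    unfolding skewblk_def p_def q_def by simp
  define lower where "lower = (\<lambda>a b :: nat \<Rightarrow> real.
    \<Sum>i<m. \<Sum>j<m. if q \<le> i \<and> j < p then L (i - q) j * a j * b i else 0)"
  define upper where "upper = (\<lambda>a b :: nat \<Rightarrow> real.
    \<Sum>i<m. \<Sum>j<m. if i < p \<and> q \<le> j then - L (j - q) i * a j * b i else 0)"
  have full: "dotv m (mv m (skewblk m L) a) b = upper a b + lower a b" for a b
  proof -
    have "dotv m (mv m (skewblk m L) a) b = (\<Sum>i<m. \<Sum>j<m. skewblk m L i j * a j * b i)"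
      unfolding dotv_def mv_def by (simp add: sum_distrib_right)
    also have "\<dots> = (\<Sum>i<m. \<Sum>j<m. (if i < p \<and> q \<le> j then - L (j - q) i * a j * b i else 0)
        + (if q \<le> i \<and> j < p then L (i - q) j * a j * b i else 0))"
      using pq by (intro sum.cong refl) (auto simp: skew)
    finally show ?thesis unfolding upper_def lower_def by (simp add: sum.distrib)
  qed
  have projected: "dotv m (mv m (skewblk m L) a) (mv m (vproj m) b) = lower a b" for a b
  proof -
    have "dotv m (mv m (skewblk m L) a) (mv m (vproj m) b)
       = (\<Sum>i<m. \<Sum>j<m. skewblk m L i j * a j * (if q \<le> i then b i else 0))"
      unfolding dotv_def mv_vproj by (simp add: mv_def sum_distrib_right q_def)
    also have "\<dots> = lower a b" unfolding lower_def
      using pq by (intro sum.cong refl) (auto simp: skew)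
    finally show ?thesis .
  qed
  \<comment> \<open>the upper-right block \<open>-\<Lambda>\<^sup>T\<close> is minus the transpose of the lower-left one\<close>
  have "upper a b = (\<Sum>j<m. \<Sum>i<m. if i < p \<and> q \<le> j then - L (j - q) i * a j * b i else 0)"
    unfolding upper_def by (rule sum.swap)
  also have "\<dots> = (\<Sum>j<m. \<Sum>i<m. - (if q \<le> j \<and> i < p then L (j - q) i * b i * a j else 0))"
    by (intro sum.cong refl) auto
  also have "\<dots> = - lower b a" unfolding lower_def by (simp add: sum_negf)
  finally show ?thesis using full[of a b] projected[of a b] projected[of b a] by simp
qed

lemma sgnblk_dotv: "dotv m (mv m (sgnblk m) a) b = dotv m a b - 2 * dotv m (mv m (vproj m) a) b"
proof -
  have "mv m (sgnblk m) a i * b i = a i * b i - 2 * ((if m - m div 2 \<le> i then a i else 0) * b i)"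
    if "i < m" for i
  proof -
    have "(\<Sum>j<m. sgnblk m i j * a j) = (if i < m - m div 2 then 1 else -1) * a i"
      using that unfolding sgnblk_def by (simp add: if_distrib[of "\<lambda>c. c * _"] sum.delta cong: if_cong)
    thus ?thesis using that by (auto simp: mv_def)
  qed
  hence "dotv m (mv m (sgnblk m) a) b
      = (\<Sum>i<m. a i * b i - 2 * ((if m - m div 2 \<le> i then a i else 0) * b i))"
    unfolding dotv_def by (intro sum.cong) auto
  also have "\<dots> = dotv m a b - 2 * dotv m (mv m (vproj m) a) b"
    unfolding dotv_def mv_vproj by (simp add: sum_subtractf sum_distrib_left)
  finally show ?thesis .
qed

lemma sgnblk_symblk: "meq m (mmul m (sgnblk m) (symblk m L)) (mscale (-1) (skewblk m L))"
  unfolding meq_def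
proof (intro allI impI)
  fix i j assume "i < m" "j < m"
  hence "mmul m (sgnblk m) (symblk m L) i j = (if i < m - m div 2 then 1 else -1) * symblk m L i j"
    unfolding mmul_def sgnblk_def by (simp add: if_distrib[of "\<lambda>c. c * _"] sum.delta cong: if_cong)
  also have "\<dots> = mscale (-1) (skewblk m L) i j"
    unfolding symblk_def skewblk_def mscale_def by auto
  finally show "mmul m (sgnblk m) (symblk m L) i j = mscale (-1) (skewblk m L) i j" .
qed

definition vprojQ :: "nat \<Rightarrow> rmat \<Rightarrow> rmat" where
  "vprojQ m Q = mmul m (mtr Q) (mmul m (vproj m) Q)"

definition khalf :: "nat \<Rightarrow> rmat \<Rightarrow> rmat \<Rightarrow> rvec \<Rightarrow> rvec \<Rightarrow> real" where
  "khalf m K Q a b = dotv m (mv m K a) (mv m (vprojQ m Q) b)"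

lemma dotv_vprojQ: "dotv m g (mv m (vprojQ m Q) z) = (\<Sum>i\<in>{m - m div 2..<m}. mv m Q g i * mv m Q z i)"
proof -
  have "dotv m g (mv m (vprojQ m Q) z) = dotv m (mv m Q g) (mv m (vproj m) (mv m Q z))"
    unfolding vprojQ_def by (simp add: mv_mmul dotv_mv_mtr)
  also have "\<dots> = (\<Sum>i<m. if m - m div 2 \<le> i then mv m Q g i * mv m Q z i else 0)"
    unfolding dotv_def mv_vproj by (intro sum.cong) auto
  also have "\<dots> = (\<Sum>i\<in>{i\<in>{..<m}. m - m div 2 \<le> i}. mv m Q g i * mv m Q z i)"
    by (rule sum.inter_filter[symmetric]) simp
  also have "{i\<in>{..<m}. m - m div 2 \<le> i} = {m - m div 2..<m}" by auto
  finally show ?thesis .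
qed

lemma gradv_dot_v_eq_dotv_vprojQ: "gradv_dot_v m Q S z = dotv m (gradv m S z) (mv m (vprojQ m Q) z)"
  unfolding gradv_dot_v_def dotv_vprojQ ..

lemma dotv_K_split:
  assumes Q: "orthogonal_mat m Q"
    and KQ: "meq m K (mmul m (mtr Q) (mmul m (skewblk m L) Q))"
  shows "dotv m (mv m K a) b = khalf m K Q a b - khalf m K Q b a"
proof -
  define X where "X = (\<lambda>a. mv m (skewblk m L) (mv m Q a))"
  have K_rotated: "dotv m (mv m K a) c = dotv m (X a) (mv m Q c)" for a c
    unfolding X_def by (simp add: mv_meq[OF KQ] mv_mmul dotv_mv_mtr)
  have "mv m Q (mv m (vprojQ m Q) b) = mv m (mmul m Q (mtr Q)) (mv m (vproj m) (mv m Q b))" for b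
    unfolding vprojQ_def by (simp add: mv_mmul)
  hence khalf_rotated: "khalf m K Q a b = dotv m (X a) (mv m (vproj m) (mv m Q b))" for a b
    unfolding khalf_def K_rotated by (simp add: mv_meq[OF orthogonal_mat_right_inverse[OF Q]])
  show ?thesis unfolding K_rotated khalf_rotated X_def by (rule skewblk_split)
qed

lemma Atilde_quadratic_form:
  assumes "orthogonal_mat m Q"
  shows "dotv m (mv m (Atilde m Q A) J) J
    = dotv m (mv m A J) J - 2 * dotv m (mv m A J) (mv m (vprojQ m Q) J)"
proof -
  define w where "w = mv m A J"
  have QtQ: "meq m (mmul m (mtr Q) Q) idm" using assms unfolding Defs.orthogonal_mat_def .
  have "dotv m (mv m (Atilde m Q A) J) J = dotv m (mv m (sgnblk m) (mv m Q w)) (mv m Q J)"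
    unfolding Atilde_def w_def by (simp add: mv_mmul dotv_mv_mtr)
  also have "\<dots> = dotv m (mv m Q w) (mv m Q J) - 2 * dotv m (mv m (vproj m) (mv m Q w)) (mv m Q J)"
    by (rule sgnblk_dotv)
  also have "dotv m (mv m Q w) (mv m Q J) = dotv m w J"
    unfolding dotv_mv_mtr mv_mmul[symmetric] mv_meq[OF QtQ] by simp
  also have "dotv m (mv m (vproj m) (mv m Q w)) (mv m Q J) = dotv m w (mv m (vprojQ m Q) J)"
    unfolding vprojQ_def by (simp add: dotv_mv_mtr mv_mmul)
  finally show ?thesis unfolding w_def .
qed

lemma Atilde_eq_scaled_K:
  assumes Q: "orthogonal_mat m Q"
    and KQ: "meq m K (mmul m (mtr Q) (mmul m (skewblk m L) Q))"
    and AQ: "meq m A (mscale \<alpha> (mmul m (mtr Q) (mmul m (symblk m L) Q)))"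
  shows "meq m (Atilde m Q A) (mscale (- \<alpha>) K)"
proof -
  note cong_left = meq_mmul[OF meq_refl] and cong_right = meq_mmul[OF _ meq_refl]
  have "meq m (Atilde m Q A)
      (mmul m (mtr Q) (mmul m (sgnblk m) (mmul m Q (mscale \<alpha> (mmul m (mtr Q) (mmul m (symblk m L) Q))))))"
    unfolding Atilde_def by (intro cong_left AQ)
  also have "\<dots> = mscale \<alpha>
      (mmul m (mtr Q) (mmul m (sgnblk m) (mmul m (mmul m Q (mtr Q)) (mmul m (symblk m L) Q))))"
    by (simp only: mmul_mscale_right mmul_assoc)
  also have "meq m \<dots> (mscale \<alpha> (mmul m (mtr Q) (mmul m (sgnblk m) (mmul m idm (mmul m (symblk m L) Q)))))"
    by (intro meq_mscale cong_left cong_right orthogonal_mat_right_inverse[OF Q])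
  also have "meq m \<dots> (mscale \<alpha> (mmul m (mtr Q) (mmul m (sgnblk m) (mmul m (symblk m L) Q))))"
    by (intro meq_mscale cong_left mmul_idm_left)
  also have "\<dots> = mscale \<alpha> (mmul m (mtr Q) (mmul m (mmul m (sgnblk m) (symblk m L)) Q))"
    by (simp only: mmul_assoc)
  also have "meq m \<dots> (mscale \<alpha> (mmul m (mtr Q) (mmul m (mscale (-1) (skewblk m L)) Q)))"
    by (intro meq_mscale cong_left cong_right sgnblk_symblk)
  also have "\<dots> = mscale (- \<alpha>) (mmul m (mtr Q) (mmul m (skewblk m L) Q))"
    unfolding mmul_mscale_left mmul_mscale_right by (simp add: mscale_def)
  also have "meq m \<dots> (mscale (- \<alpha>) K)"
    by (intro meq_mscale) (rule meq_sym[OF KQ])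
  finally show ?thesis .
qed

lemma antisym_Atilde:
  assumes "orthogonal_mat m Q" and K: "antisym_mat m K"
    and "meq m K (mmul m (mtr Q) (mmul m (skewblk m L) Q))"
    and "meq m A (mscale \<alpha> (mmul m (mtr Q) (mmul m (symblk m L) Q)))"
  shows "antisym_mat m (Atilde m Q A)"
  unfolding antisym_mat_def
proof (intro allI impI)
  fix i j assume ij: "i < m" "j < m"
  have "K j i = - K i j" using K ij unfolding antisym_mat_def by blast
  moreover have "Atilde m Q A j i = - \<alpha> * K j i" "Atilde m Q A i j = - \<alpha> * K i j"
    using Atilde_eq_scaled_K[OF assms(1,3,4)] ij unfolding meq_def mscale_def by auto
  ultimately show "Atilde m Q A j i = - Atilde m Q A i j" by simp
qed

lemma dotv_vprojQ_vanish:
  assumes M: "antisym_mat m M"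
    and MQ: "\<forall>i<m. \<forall>j. m - m div 2 \<le> j \<and> j < m \<longrightarrow> mmul m M (mtr Q) i j = 0"
  shows "dotv m (mv m M a) (mv m (vprojQ m Q) b) = 0"
proof -
  have "mv m M (mv m (vprojQ m Q) b) = mv m (mmul m M (mtr Q)) (mv m (vproj m) (mv m Q b))"
    unfolding vprojQ_def by (simp add: mv_mmul)
  also have "\<dots> = (\<lambda>i. 0)"
    unfolding mv_vproj using MQ by (auto intro!: ext sum.neutral simp: mv_def)
  finally have MP: "mv m M (mv m (vprojQ m Q) b) = (\<lambda>i. 0)" .
  have "mv m (mtr M) v i = - mv m M v i" for v i
  proof -
    have "\<forall>j<m. mtr M i j = - M i j" if "i < m"
      using M that unfolding antisym_mat_def mtr_def by blast
    thus ?thesis unfolding mv_def by (auto simp: sum_negf[symmetric] intro!: sum.cong)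
  qed
  hence "dotv m a (mv m (mtr M) (mv m (vprojQ m Q) b)) = - dotv m a (mv m M (mv m (vprojQ m Q) b))"
    unfolding dotv_def by (simp add: sum_negf[symmetric])
  thus ?thesis unfolding dotv_mv_mtr MP by (simp add: dotv_def)
qed

section \<open>Calculus on a single cell\<close>

definition mv_poly :: "nat \<Rightarrow> rmat \<Rightarrow> (nat \<Rightarrow> nat \<Rightarrow> real poly) \<Rightarrow> nat \<Rightarrow> nat \<Rightarrow> real poly" where
  "mv_poly m P Z = (\<lambda>j i. \<Sum>l<m. Polynomial.smult (P i l) (Z j l))"

lemma cellv_mv_poly: "cellv m (mv_poly m P Z) j y = mv m P (cellv m Z j y)"
  unfolding cellv_def mv_poly_def mv_def by (auto intro!: ext sum.cong simp: poly_sum)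

lemma pderiv_sum: "pderiv (sum f A) = (\<Sum>x\<in>A. pderiv (f x))"
  by (induction A rule: infinite_finite_induct) (simp_all add: pderiv_add)

lemma cellvd_mv_poly: "cellvd m (mv_poly m P Z) j y = mv m P (cellvd m Z j y)"
  unfolding cellvd_def mv_poly_def mv_def
  by (auto intro!: ext sum.cong simp: poly_sum pderiv_sum pderiv_smult)

lemma in_Vh_mv_poly: "in_Vh m N k Z \<Longrightarrow> in_Vh m N k (mv_poly m P Z)"
  unfolding in_Vh_def mv_poly_def by (auto intro!: degree_sum_le order.trans[OF degree_smult_le])

lemma cellv_in_vecs: "cellv m Z j y \<in> vecs m"
  unfolding cellv_def vecs_def by auto

lemma continuous_on_cellv: "continuous_on U (\<lambda>y. cellv m Z j y i)"
  unfolding cellv_def by (cases "i < m") (simp_all add: continuous_intros)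

lemma continuous_on_mv:
  assumes "\<And>j. j < m \<Longrightarrow> continuous_on U (\<lambda>y. v y j)"
  shows "continuous_on U (\<lambda>y. mv m Q (v y) i)"
  unfolding mv_def using assms by (cases "i < m") (auto intro!: continuous_intros)

lemma continuous_on_cont_vecs_comp:
  fixes c :: "'a::metric_space \<Rightarrow> rvec"
  assumes h: "cont_vecs m h" and c: "\<And>y. y \<in> U \<Longrightarrow> c y \<in> vecs m"
    and cc: "\<And>i. i < m \<Longrightarrow> continuous_on U (\<lambda>y. c y i)"
  shows "continuous_on U (\<lambda>y. h (c y))"
proof -
  have "\<exists>\<delta>>0. \<forall>y\<in>U. dist y y0 < \<delta> \<longrightarrow> dist (h (c y)) (h (c y0)) < e"
    if y0: "y0 \<in> U" and e: "0 < e" for y0 e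
  proof -
    obtain d where d: "d > 0"
      and hd: "\<forall>z\<in>vecs m. enorm m (\<lambda>i. z i - c y0 i) < d \<longrightarrow> \<bar>h z - h (c y0)\<bar> < e"
      using h c[OF y0] e unfolding cont_vecs_def by blast
    define \<phi> where "\<phi> = (\<lambda>y. enorm m (\<lambda>i. c y i - c y0 i))"
    have "continuous_on U \<phi>" unfolding \<phi>_def enorm_def by (intro continuous_intros cc) auto
    then obtain \<delta> where \<delta>: "\<delta> > 0" and h\<delta>: "\<forall>y\<in>U. dist y y0 < \<delta> \<longrightarrow> dist (\<phi> y) (\<phi> y0) < d"
      using y0 d unfolding continuous_on_iff by blast
    have "\<phi> y0 = 0" "\<And>y. \<phi> y \<ge> 0" unfolding \<phi>_def enorm_def by (simp_all add: sum_nonneg)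
    hence "\<forall>y\<in>U. dist y y0 < \<delta> \<longrightarrow> dist (h (c y)) (h (c y0)) < e"
      using h\<delta> hd c unfolding \<phi>_def dist_real_def by auto
    thus ?thesis using \<delta> by blast
  qed
  thus ?thesis unfolding continuous_on_iff by blast
qed

lemma continuous_on_smooth_cellv:
  assumes "smooth_vecs m S"
  shows "continuous_on U (\<lambda>y. S (cellv m Z j y))"
    and "i < m \<Longrightarrow> continuous_on U (\<lambda>y. gradv m S (cellv m Z j y) i)"
proof -
  obtain D where D0: "D [] = S" and Dc: "\<And>is. cont_vecs m (D is)"
    and Dd: "\<And>is i z. i < m \<Longrightarrow> z \<in> vecs m \<Longrightarrow>
          ((\<lambda>t. D is (shift z i t)) has_real_derivative D (i # is) z) (at 0)"
    using assms unfolding smooth_vecs_def by blast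
  have cont_D: "continuous_on U (\<lambda>y. D is (cellv m Z j y))" for "is"
    by (rule continuous_on_cont_vecs_comp[OF Dc cellv_in_vecs continuous_on_cellv])
  show "continuous_on U (\<lambda>y. S (cellv m Z j y))" using cont_D[of "[]"] by (simp add: D0)
  assume "i < m"
  hence "gradv m S (cellv m Z j y) i = D [i] (cellv m Z j y)" for y
    using Dd[OF _ cellv_in_vecs] unfolding gradv_def D0[symmetric] by (simp add: DERIV_imp_deriv)
  thus "continuous_on U (\<lambda>y. gradv m S (cellv m Z j y) i)" using cont_D[of "[i]"] by simp
qed

lemma continuous_on_gradv_dot_v_cellv:
  "smooth_vecs m S \<Longrightarrow> continuous_on U (\<lambda>y. gradv_dot_v m Q S (cellv m Z j y))"
  unfolding gradv_dot_v_def
  by (intro continuous_on_sum continuous_on_mult continuous_on_mv continuous_on_smooth_cellv(2)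
      continuous_on_cellv)

lemma has_real_derivative_dotv_mv:
  assumes "\<And>i. i < m \<Longrightarrow> ((\<lambda>y. a y i) has_real_derivative a' i) (at y)"
    and "\<And>i. i < m \<Longrightarrow> ((\<lambda>y. b y i) has_real_derivative b' i) (at y)"
  shows "((\<lambda>y. dotv m (mv m A (a y)) (mv m B (b y))) has_real_derivative
          dotv m (mv m A a') (mv m B (b y)) + dotv m (mv m A (a y)) (mv m B b')) (at y)"
proof -
  have "((\<lambda>y. \<Sum>i<m. (\<Sum>j<m. A i j * a y j) * (\<Sum>l<m. B i l * b y l)) has_real_derivative
      (\<Sum>i<m. (\<Sum>j<m. A i j * a' j) * (\<Sum>l<m. B i l * b y l) + (\<Sum>l<m. B i l * b' l) * (\<Sum>j<m. A i j * a y j)))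
      (at y)"
    by (intro DERIV_sum DERIV_mult DERIV_cmult assms) auto
  thus ?thesis unfolding dotv_def mv_def by (simp add: sum.distrib mult.commute)
qed

lemma cellv_has_real_derivative: "((\<lambda>y. cellv m Z j y i) has_real_derivative cellvd m Z j y i) (at y)"
  unfolding cellv_def cellvd_def by (simp add: poly_DERIV)

lemma cellvd_has_real_derivative:
  "((\<lambda>y. cellvd m Z j y i) has_real_derivative cellvd m (\<lambda>j i. pderiv (Z j i)) j y i) (at y)"
  unfolding cellvd_def by (simp add: poly_DERIV)

lemma continuous_on_khalf_cellv: "continuous_on U (\<lambda>y. khalf m K Q (cellv m Z j y) (cellvd m Z j y))"
  unfolding khalf_def
proof (rule DERIV_continuous_on, rule has_field_derivative_at_within)
  show "((\<lambda>y. dotv m (mv m K (cellv m Z j y)) (mv m (vprojQ m Q) (cellvd m Z j y))) has_real_derivative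
      dotv m (mv m K (cellvd m Z j y)) (mv m (vprojQ m Q) (cellvd m Z j y))
      + dotv m (mv m K (cellv m Z j y)) (mv m (vprojQ m Q) (cellvd m (\<lambda>j i. pderiv (Z j i)) j y))) (at y)"
    for y by (intro has_real_derivative_dotv_mv cellv_has_real_derivative cellvd_has_real_derivative)
qed

lemma khalf_cellv_has_integral:
  assumes "a \<le> b"
  shows "((\<lambda>y. khalf m K Q (cellvd m Z j y) (cellv m Z j y) + khalf m K Q (cellv m Z j y) (cellvd m Z j y))
     has_integral (khalf m K Q (cellv m Z j b) (cellv m Z j b) - khalf m K Q (cellv m Z j a) (cellv m Z j a)))
    {a..b}"
proof (rule fundamental_theorem_of_calculus[OF assms])
  fix y
  have "((\<lambda>y. khalf m K Q (cellv m Z j y) (cellv m Z j y)) has_real_derivative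
     khalf m K Q (cellvd m Z j y) (cellv m Z j y) + khalf m K Q (cellv m Z j y) (cellvd m Z j y)) (at y)"
    unfolding khalf_def by (intro has_real_derivative_dotv_mv cellv_has_real_derivative)
  thus "((\<lambda>y. khalf m K Q (cellv m Z j y) (cellv m Z j y)) has_vector_derivative
     khalf m K Q (cellvd m Z j y) (cellv m Z j y) + khalf m K Q (cellv m Z j y) (cellvd m Z j y))
     (at y within {a..b})"
    by (simp add: has_real_derivative_iff_has_vector_derivative has_vector_derivative_at_within)
qed

section \<open>The energy identity\<close>

lemma dg_cell_eq_vprojQ:
  assumes M: "antisym_mat m M"
    and MQ: "\<forall>i<m. \<forall>j. m - m div 2 \<le> j \<and> j < m \<longrightarrow> mmul m M (mtr Q) i j = 0"
    and "dg_cell_eq m x N M K A B S Z DZ (mv_poly m (vprojQ m Q) Z) j"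
  shows "- integral {x (j - 1)..x j} (\<lambda>y. khalf m K Q (cellv m Z j y) (cellvd m Z j y))
      + dotv m (flux m x N K A B Z DZ j) (mv m (vprojQ m Q) (cellv m Z j (x j)))
      - dotv m (flux m x N K A B Z DZ (prv N j)) (mv m (vprojQ m Q) (cellv m Z j (x (j - 1))))
    = integral {x (j - 1)..x j} (\<lambda>y. gradv_dot_v m Q S (cellv m Z j y))"
  using assms(3)
  unfolding dg_cell_eq_def cellv_mv_poly cellvd_mv_poly dotv_vprojQ_vanish[OF M MQ]
  unfolding khalf_def[symmetric] gradv_dot_v_eq_dotv_vprojQ[symmetric]
  by simp

lemma cell_energy_identity:
  assumes Q: "orthogonal_mat m Q"
    and KQ: "meq m K (mmul m (mtr Q) (mmul m (skewblk m L) Q))"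
    and S: "smooth_vecs m S" and ab: "a \<le> b"
    and dg: "- integral {a..b} (\<lambda>y. khalf m K Q (cellv m Z j y) (cellvd m Z j y)) + Fb - Fa
      = integral {a..b} (\<lambda>y. gradv_dot_v m Q S (cellv m Z j y))"
  shows "integral {a..b} (\<lambda>y. S (cellv m Z j y) - dotv m (mv m K (cellvd m Z j y)) (cellv m Z j y) / 2)
    = integral {a..b} (\<lambda>y. S (cellv m Z j y) - gradv_dot_v m Q S (cellv m Z j y))
      + (Fb - khalf m K Q (cellv m Z j b) (cellv m Z j b) / 2)
      - (Fa - khalf m K Q (cellv m Z j a) (cellv m Z j a) / 2)"
proof -
  define s where "s = (\<lambda>y. S (cellv m Z j y))"
  define g where "g = (\<lambda>y. gradv_dot_v m Q S (cellv m Z j y))"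
  define h where "h = (\<lambda>y. khalf m K Q (cellv m Z j y) (cellvd m Z j y))"
  define d where "d = (\<lambda>y. khalf m K Q (cellvd m Z j y) (cellv m Z j y) + h y)"
  define E where "E = (\<lambda>y. khalf m K Q (cellv m Z j y) (cellv m Z j y))"
  have integrable: "s integrable_on {a..b}" "g integrable_on {a..b}" "h integrable_on {a..b}"
    unfolding s_def g_def h_def using S
    by (auto intro!: integrable_continuous_interval continuous_on_smooth_cellv
        continuous_on_gradv_dot_v_cellv continuous_on_khalf_cellv)
  have "(d has_integral (E b - E a)) {a..b}"
    unfolding d_def h_def E_def by (rule khalf_cellv_has_integral[OF ab])
  hence d_integral: "d integrable_on {a..b}" "integral {a..b} d = E b - E a" by auto
  have "(\<lambda>y. S (cellv m Z j y) - dotv m (mv m K (cellvd m Z j y)) (cellv m Z j y) / 2)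
      = (\<lambda>y. (s y - g y) + (g y + h y) - d y / 2)"
    unfolding s_def g_def h_def d_def dotv_K_split[OF Q KQ] by (simp add: field_simps)
  hence "integral {a..b} (\<lambda>y. S (cellv m Z j y) - dotv m (mv m K (cellvd m Z j y)) (cellv m Z j y) / 2)
      = integral {a..b} (\<lambda>y. s y - g y) + (integral {a..b} g + integral {a..b} h) - (E b - E a) / 2"
    using integrable d_integral
    by (simp add: integral_diff integral_add integrable_diff integrable_add integral_divide
        integrable_on_divide)
  also have "integral {a..b} g + integral {a..b} h = Fb - Fa"
    using dg unfolding g_def h_def by simp
  finally show ?thesis unfolding s_def g_def E_def by (simp add: diff_divide_distrib)
qed

lemma interface_identity:
  fixes a b c :: rvec and A :: rmat
  assumes Q: "orthogonal_mat m Q" and M: "antisym_mat m M"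
    and KQ: "meq m K (mmul m (mtr Q) (mmul m (skewblk m L) Q))"
    and B: "meq m B (mscale \<beta> M)"
    and MQ: "\<forall>i<m. \<forall>j. m - m div 2 \<le> j \<and> j < m \<longrightarrow> mmul m M (mtr Q) i j = 0"
  defines "F \<equiv> (\<lambda>i. mv m K (\<lambda>i. (a i + b i) / 2) i + mv m A (\<lambda>i. a i - b i) i + mv m B c i)"
  shows "(dotv m F (mv m (vprojQ m Q) b) - khalf m K Q b b / 2)
      - (dotv m F (mv m (vprojQ m Q) a) - khalf m K Q a a / 2)
      + dotv m (\<lambda>i. mv m K (\<lambda>i. (a i + b i) / 2) i + mv m A (\<lambda>i. a i - b i) i) (\<lambda>i. a i - b i) / 2
    = dotv m (mv m (Atilde m Q A) (\<lambda>i. a i - b i)) (\<lambda>i. a i - b i) / 2"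
proof -
  define J where "J = (\<lambda>i. a i - b i)"
  define av where "av = (\<lambda>i. (a i + b i) / 2)"
  have B0: "dotv m (mv m B c) (mv m (vprojQ m Q) w) = 0" for w
    using dotv_vprojQ_vanish[OF M MQ, of c w] unfolding mv_meq[OF B] mv_mscale dotv_def
    by (simp add: sum_distrib_left[symmetric] mult.assoc)
  have flux_a_b: "dotv m F (mv m (vprojQ m Q) b) - dotv m F (mv m (vprojQ m Q) a)
      = - (khalf m K Q av J + dotv m (mv m A J) (mv m (vprojQ m Q) J))"
    unfolding F_def J_def av_def mv_diff dotv_diff_right dotv_add_left khalf_def
    using B0 by simp
  have central: "dotv m (\<lambda>i. mv m K av i + mv m A J i) J
      = khalf m K Q av J - khalf m K Q J av + dotv m (mv m A J) J"
    unfolding dotv_add_left dotv_K_split[OF Q KQ] ..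
  have "khalf m K Q av J = (khalf m K Q a a - khalf m K Q a b + khalf m K Q b a - khalf m K Q b b) / 2"
    "khalf m K Q J av = (khalf m K Q a a + khalf m K Q a b - khalf m K Q b a - khalf m K Q b b) / 2"
    unfolding av_def J_def khalf_def mv_average mv_diff dotv_average_left dotv_average_right
      dotv_diff_left dotv_diff_right
    by (simp_all add: field_simps)
  thus ?thesis using flux_a_b central Atilde_quadratic_form[OF Q, of A J]
    unfolding J_def[symmetric] av_def[symmetric] by (simp add: field_simps)
qed

lemma sum_prv:
  assumes "N \<ge> 1"
  shows "(\<Sum>j=1..N. g (prv N j)) = (\<Sum>l=1..N. g l)"
  by (rule sum.reindex_bij_witness[where i = "nxt N" and j = "prv N"])
    (use assms in \<open>auto simp: nxt_def prv_def\<close>)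

lemma vplus_prv: "j \<in> {1..N} \<Longrightarrow> vplus m x N Z (prv N j) = cellv m Z j (x (j - 1))"
  unfolding vplus_def nxt_def prv_def by auto

lemma energy_identity:
  assumes N: "N \<ge> 1" and mesh: "\<forall>j<N. x j < x (Suc j)"
    and M: "antisym_mat m M" and Q: "orthogonal_mat m Q"
    and KQ: "meq m K (mmul m (mtr Q) (mmul m (skewblk m L) Q))"
    and B: "meq m B (mscale \<beta> M)"
    and MQ: "\<forall>i<m. \<forall>j. m - m div 2 \<le> j \<and> j < m \<longrightarrow> mmul m M (mtr Q) i j = 0"
    and S: "smooth_vecs m S"
    and Z: "in_Vh m N k Z"
    and dg: "\<And>Phi j. in_Vh m N k Phi \<Longrightarrow> j \<in> {1..N} \<Longrightarrow> dg_cell_eq m x N M K A B S Z DZ Phi j"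
  shows "energy m x N K A S Z = bulk_term m x N Q S Z
      + (\<Sum>l=1..N. dotv m (mv m (Atilde m Q A) (jmp m x N Z l)) (jmp m x N Z l)) / 2"
proof -
  define boundary where "boundary = (\<lambda>l w.
    dotv m (flux m x N K A B Z DZ l) (mv m (vprojQ m Q) w) - khalf m K Q w w / 2)"
  define jump_term where "jump_term = (\<lambda>l.
    dotv m (\<lambda>i. mv m K (avg m x N Z l) i + mv m A (jmp m x N Z l) i) (jmp m x N Z l))"
  have cell: "integral {x (j - 1)..x j}
        (\<lambda>y. S (cellv m Z j y) - dotv m (mv m K (cellvd m Z j y)) (cellv m Z j y) / 2)
      = integral {x (j - 1)..x j} (\<lambda>y. S (cellv m Z j y) - gradv_dot_v m Q S (cellv m Z j y))
        + boundary j (vminus m x Z j) - boundary (prv N j) (vplus m x N Z (prv N j))"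
    if j: "j \<in> {1..N}" for j
  proof -
    have "j - 1 < N" "Suc (j - 1) = j" using j by auto
    hence ab: "x (j - 1) \<le> x j" using mesh by (metis less_imp_le)
    have "dg_cell_eq m x N M K A B S Z DZ (mv_poly m (vprojQ m Q) Z) j"
      using dg[OF in_Vh_mv_poly[OF Z] j] .
    from cell_energy_identity[OF Q KQ S ab dg_cell_eq_vprojQ[OF M MQ this]]
    show ?thesis unfolding boundary_def vminus_def vplus_prv[OF j] by simp
  qed
  have interface: "boundary l (vminus m x Z l) - boundary l (vplus m x N Z l) + jump_term l / 2
      = dotv m (mv m (Atilde m Q A) (jmp m x N Z l)) (jmp m x N Z l) / 2" for l
    unfolding boundary_def jump_term_def flux_def avg_def jmp_def
    by (rule interface_identity[OF Q M KQ B MQ])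
  have "energy m x N K A S Z = (\<Sum>j=1..N. integral {x (j - 1)..x j}
        (\<lambda>y. S (cellv m Z j y) - gradv_dot_v m Q S (cellv m Z j y))
        + boundary j (vminus m x Z j) - boundary (prv N j) (vplus m x N Z (prv N j))) + (\<Sum>l=1..N. jump_term l) / 2"
    unfolding energy_def jump_term_def using cell by simp
  also have "\<dots> = bulk_term m x N Q S Z + (\<Sum>l=1..N. boundary l (vminus m x Z l) - boundary l (vplus m x N Z l) + jump_term l / 2)"
    unfolding bulk_term_def sum.distrib sum_subtractf sum_divide_distrib
      sum_prv[OF N, of "\<lambda>l. boundary l (vplus m x N Z l)"] by simp
  also have "\<dots> = bulk_term m x N Q S Z
      + (\<Sum>l=1..N. dotv m (mv m (Atilde m Q A) (jmp m x N Z l)) (jmp m x N Z l)) / 2"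
    unfolding interface sum_divide_distrib ..
  finally show ?thesis .
qed

theorem corollary3p1:
  fixes m N k :: nat and x :: "nat \<Rightarrow> real" and T :: real
    and M K A B Q L :: "nat \<Rightarrow> nat \<Rightarrow> real" and \<beta> :: real
    and S :: "(nat \<Rightarrow> real) \<Rightarrow> real"
    and zh dzh :: "real \<Rightarrow> nat \<Rightarrow> nat \<Rightarrow> real poly"
  assumes N: "N \<ge> 1"
    and mesh: "\<forall>j<N. x j < x (Suc j)"
    and T: "T > 0"
    and M: "antisym_mat m M" and K: "antisym_mat m K"
    and S: "smooth_vecs m S"
    and A: "sym_mat m A"
    and Q: "orthogonal_mat m Q"
    and KQ: "meq m K (mmul m (mtr Q) (mmul m (skewblk m L) Q))"
    and B: "meq m B (mscale \<beta> M)"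
    and MQ: "\<forall>i<m. \<forall>j. m - m div 2 \<le> j \<and> j < m \<longrightarrow> mmul m M (mtr Q) i j = 0"
    and sol: "dg_solution m N k x T M K A B S zh dzh"
  shows "(\<forall>t\<in>{0..T}.
           energy m x N K A S (zh t) =
             bulk_term m x N Q S (zh t)
             + (\<Sum>l=1..N. dotv m (mv m (Atilde m Q A) (jmp m x N (zh t) l)) (jmp m x N (zh t) l)) / 2)
         \<and> (\<forall>\<alpha>\<in>{-1/2..1/2}. meq m A (mscale \<alpha> (mmul m (mtr Q) (mmul m (symblk m L) Q))) \<longrightarrow>
           antisym_mat m (Atilde m Q A) \<and>
           (\<forall>t\<in>{0..T}. energy m x N K A S (zh t) = bulk_term m x N Q S (zh t)))"
proof -
  have energy: "energy m x N K A S (zh t) = bulk_term m x N Q S (zh t)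
      + (\<Sum>l=1..N. dotv m (mv m (Atilde m Q A) (jmp m x N (zh t) l)) (jmp m x N (zh t) l)) / 2"
    if "t \<in> {0..T}" for t
    using sol that unfolding dg_solution_def
    by (intro energy_identity[where DZ = "dzh t", OF N mesh M Q KQ B MQ S]) auto
  have "antisym_mat m (Atilde m Q A) \<and> (\<forall>t\<in>{0..T}. energy m x N K A S (zh t) = bulk_term m x N Q S (zh t))"
    if "meq m A (mscale \<alpha> (mmul m (mtr Q) (mmul m (symblk m L) Q)))" for \<alpha>
  proof
    show anti: "antisym_mat m (Atilde m Q A)" by (rule antisym_Atilde[OF Q K KQ that])
    show "\<forall>t\<in>{0..T}. energy m x N K A S (zh t) = bulk_term m x N Q S (zh t)"
      using energy by (simp add: dotv_antisym_self[OF anti])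
  qed
  with energy show ?thesis by blast
qed

end
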